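(* Let $e\geq 2$, $N=\langle\sigma\rangle$ cyclic of order $2^e$, and let $G$ be a non-regular transitive subgroup of $\mathrm{Hol}(N)$. Then: (a) the centre $Z(G)$ contains the element $\sigma^{2^{e-1}}$ of order $2$ and is cyclic; (b) if $G$ has no element of order $2^e$, then $Z(G)$ contains the element $[\sigma^{2^{e-2}},\varphi_{1+2^{e-1}}]$, which has order $4$.
   Context: For an odd integer $a$, $\varphi_a\in\mathrm{Aut}(N)$ is $\sigma\mapsto\sigma^a$. Elements of $\mathrm{Hol}(N)=N\rtimes\mathrm{Aut}(N)$ are written $[\sigma^u,\varphi_a]$ with $[\sigma^u,\varphi_a][\sigma^v,\varphi_b]=[\sigma^{u+va},\varphi_{ab}]$, and $\sigma^u$ denotes $[\sigma^u,\varphi_1]$. $\mathrm{Hol}(N)$ acts on $N$ by $[\sigma^u,\varphi_a]\cdot\sigma^v=\sigma^{u+av}$; a subgroup is transitive if it acts transitively on $N$, and regular if it is transitive with trivial stabiliser $\mathrm{Stab}(1_N)=G\cap\mathrm{Aut}(N)$. *)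

theory Defs
  imports "HOL-Algebra.Algebra"
begin

text \<open>The holomorph Hol(N) of N = <sigma> cyclic of order 2^e.  The element
  [sigma^u, phi_a] (u mod 2^e, a odd mod 2^e) is encoded as the pair (u, a)
  with 0 <= u < 2^e and 0 <= a < 2^e, a odd.\<close>

definition Hol :: "nat \<Rightarrow> (nat \<times> nat) monoid" where
  "Hol e = \<lparr> carrier = {(u, a). u < 2^e \<and> a < 2^e \<and> odd a},
             monoid.mult = (\<lambda>(u, a) (v, b). ((u + v * a) mod 2^e, (a * b) mod 2^e)),
             one = (0, 1 mod 2^e) \<rparr>"

definition hol_act :: "nat \<Rightarrow> nat \<times> nat \<Rightarrow> nat \<Rightarrow> nat" where
  "hol_act e g v = (fst g + snd g * v) mod 2^e"

definition transitive_sub :: "nat \<Rightarrow> (nat \<times> nat) set \<Rightarrow> bool" where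
  "transitive_sub e G \<longleftrightarrow> (\<forall>v < 2^e. \<forall>w < 2^e. \<exists>g \<in> G. hol_act e g v = w)"

text \<open>Stabiliser of 1_N (= sigma^0), i.e. G \<inter> Aut(N).\<close>
definition stab1 :: "nat \<Rightarrow> (nat \<times> nat) set \<Rightarrow> (nat \<times> nat) set" where
  "stab1 e G = {g \<in> G. hol_act e g 0 = 0}"

definition regular_sub :: "nat \<Rightarrow> (nat \<times> nat) set \<Rightarrow> bool" where
  "regular_sub e G \<longleftrightarrow> transitive_sub e G \<and> stab1 e G = {\<one>\<^bsub>Hol e\<^esub>}"

definition centre :: "('a, 'b) monoid_scheme \<Rightarrow> 'a set" where
  "centre G = {z \<in> carrier G. \<forall>g \<in> carrier G. z \<otimes>\<^bsub>G\<^esub> g = g \<otimes>\<^bsub>G\<^esub> z}"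

end

theory Submission
  imports Defs
begin

(* Write [sigma^u, phi_a] as the pair (u, a).  Transitivity provides elements (w, a_w) of G for
   every w, and non-regularity an automorphism (0, b) in G with b \<noteq> 1.  The products
   (0, b)(1, a_1) and (1, a_1)(0, b) have the same automorphism part, so their quotient is a
   non-trivial translation in G, and a 2-power of it is the central translation (2^(e-1), 1).

   A central element (c, d) commutes with (1, a_1), so d is determined by c, and with (0, b),
   which forces c to be even and then d \<equiv> 1 (mod 4).  If 2^t is the largest power of two
   dividing the translation part of every central element, the centre therefore has at most
   2^(e-t) elements, while a central element with c = 2^t * odd has order 2^(e-t), by the 2-adic
   valuation of 1 + d + ... + d^(k-1).

   If G has no element of order 2^e, then (u, a) \<in> G with u odd forces a \<equiv> 3 (mod 4), and
   multiplying by (1, a_1) gives a \<equiv> 1 + 2u (mod 4) for all of G.  This congruence is exactly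
   what makes [sigma^(2^(e-2)), phi_(1+2^(e-1))] commute with G, and that element is obtained
   from the power (2, a_2)^(2^(e-3)) after correcting by (0, 1 + 2^(e-1)) and (2^(e-1), 1). *)

section \<open>Arithmetic modulo powers of two\<close>

lemma one_less_two_power: "1 \<le> e \<Longrightarrow> (1::nat) < 2^e"
  using one_less_power[of "2::nat" e] by simp

lemma odd_mod_two_power_iff: "1 \<le> e \<Longrightarrow> odd ((x::nat) mod 2^e) \<longleftrightarrow> odd x"
  by (metis dvd_mod_iff dvd_power le_iff_add plus_1_eq_Suc zero_less_Suc)

lemma mod_add_mult_mod_eq:
  "(x + u * (y mod m)) mod m = (x + u * y) mod (m::nat)"
  "(x + (y mod m) * u) mod m = (x + y * u) mod (m::nat)"
  by (metis mod_add_right_eq mod_mult_right_eq, metis mod_add_right_eq mod_mult_left_eq)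

lemma ex_inverse_mod_two_power:
  fixes a :: nat
  assumes "odd a" "1 \<le> e"
  obtains b where "b < 2^e" "odd b" "(b * a) mod 2^e = 1"
proof -
  have "gcd a (2^e) = 1"
    using assms(1) by simp
  then obtain x y where "a * x = 1 + 2^e * y"
    using bezout_nat[of a "2^e"] assms(1) by (metis add.commute odd_pos neq0_conv)
  then have "(a * x) mod 2^e = 1"
    using one_less_two_power[OF assms(2)] by (simp only: mod_mult_self2 mod_less)
  then have inv: "(x mod 2^e * a) mod 2^e = 1"
    by (simp add: mod_simps mult.commute)
  then have "odd (x mod 2^e)"
    using assms(2) by (metis even_mult_iff odd_mod_two_power_iff odd_one)
  with inv show thesis
    using that[of "x mod 2^e"] by simp
qed

lemma ex_two_power_mult_odd:
  fixes p :: nat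
  assumes "0 < p"
  obtains r m where "p = 2^r * m" "odd m"
proof -
  obtain m where "p = 2 ^ multiplicity 2 p * m" "odd m"
    using multiplicity_decompose'[of p 2] assms by auto
  then show thesis
    by (rule that)
qed

lemma two_power_pred_mult_odd_mod:
  assumes "1 \<le> e" "odd m"
  shows "(2^(e-1) * m) mod 2^e = (2::nat)^(e-1)"
proof -
  obtain k where "m = 2 * k + 1"
    using assms(2) oddE by blast
  moreover have "(2::nat)^e = 2 * 2^(e-1)"
    using assms(1) by (simp flip: power_Suc)
  ultimately show ?thesis
    by (simp add: algebra_simps)
qed

lemma one_plus_two_power_pred_mult_mod:
  assumes "2 \<le> e"
  shows "(1 + 2^(e-1) * w) mod 2^e = (if odd w then 1 + 2^(e-1) else (1::nat))"
proof -
  have "(1 + 2^(e-1) * w) mod 2^e = (1 + (2^(e-1) * w) mod 2^e) mod 2^e"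
    by (simp add: mod_simps)
  moreover have "(2::nat)^(e-1) * 2 = 2^e" "(2::nat)^(e-1) > 1"
    using assms one_less_two_power[of "e-1"] by (simp_all flip: power_Suc2)
  ultimately show ?thesis
    using two_power_pred_mult_odd_mod[of e w] assms
    by (auto elim!: evenE simp: mult.assoc[symmetric])
qed

lemma two_power_minus_two_mult_odd_mod:
  assumes "2 \<le> e" "odd w"
  shows "(2^(e-2) * w) mod 2^e = 2^(e-2) \<or> (2^(e-2) * w) mod 2^e = 3 * (2::nat)^(e-2)"
proof -
  obtain k where "e = Suc (Suc k)"
    using assms(1) by (metis add_2_eq_Suc le_iff_add)
  then have M: "(2::nat)^e = 2^(e-2) * 4"
    by simp
  have "w mod 4 = 1 \<or> w mod 4 = 3"
    using assms(2) by presburger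
  then show ?thesis
    unfolding M mod_mult_mult1 by auto
qed

lemma one_plus_two_power_pow_two_power:
  fixes m :: nat
  assumes "2 \<le> r"
  shows "\<exists>w. (1 + 2^r * m)^(2^j) = 1 + 2^(r+j) * w \<and> (odd w \<longleftrightarrow> odd m)"
proof (induction j)
  case 0
  then show ?case by auto
next
  case (Suc j)
  then obtain w where w: "(1 + 2^r * m)^(2^j) = 1 + 2^(r+j) * w" "odd w \<longleftrightarrow> odd m"
    by blast
  have "(r + j) + (r + j) = (r + Suc j) + (r + j - 1)"
    using assms by simp
  then have exp: "(2::nat)^(r+j) * 2^(r+j) = 2^(r + Suc j) * 2^(r+j-1)"
    by (metis power_add)
  have "(1 + 2^r * m)^(2^Suc j) = ((1 + 2^r * m)^(2^j))^2"
    by (simp flip: power_mult add: mult.commute)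
  also have "\<dots> = (1 + 2^(r+j) * w)^2"
    by (simp only: w(1))
  also have "\<dots> = 1 + 2^(r + Suc j) * (w + 2^(r+j-1) * w^2)"
    using exp by (simp add: power2_eq_square algebra_simps)
  finally have "(1 + 2^r * m)^(2^Suc j) = 1 + 2^(r + Suc j) * (w + 2^(r+j-1) * w^2)" .
  moreover have "odd (w + 2^(r+j-1) * w^2) \<longleftrightarrow> odd m"
    using assms w(2) by simp
  ultimately show ?case
    by blast
qed

lemma mod_4_eq_1_power_two_power:
  fixes a :: nat
  assumes "a mod 4 = 1"
  obtains w where "a^(2^j) = 1 + 2^(j+2) * w"
proof -
  have "a = 1 + 2^2 * (a div 4)"
    using assms div_mult_mod_eq[of a 4] by simp
  then show thesis
    using that one_plus_two_power_pow_two_power[of 2 "a div 4" j] by (auto simp: add.commute)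
qed

lemma sum_powers_two_power_odd_part:
  fixes a :: nat
  assumes "a mod 4 = 1"
  shows "\<exists>m. odd m \<and> (\<Sum>i<2^j. a^i) = 2^j * m"
proof (induction j)
  case 0
  then show ?case by simp
next
  case (Suc j)
  then obtain m where m: "odd m" "(\<Sum>i<2^j. a^i) = 2^j * m"
    by blast
  obtain w where w: "a^(2^j) = 1 + 2^(j+2) * w"
    using mod_4_eq_1_power_two_power[OF assms] .
  have sum_add: "(\<Sum>i<k+n. a^i) = (\<Sum>i<k. a^i) + a^k * (\<Sum>i<n. a^i)" for k n
    by (induction n) (simp_all add: algebra_simps power_add)
  have "(\<Sum>i<2^Suc j. a^i) = (\<Sum>i<2^j. a^i) + a^(2^j) * (\<Sum>i<2^j. a^i)"
    using sum_add[of "2^j" "2^j"] by (simp add: mult_2)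
  also have "\<dots> = 2^Suc j * (m * (1 + 2^(j+1) * w))"
    by (simp add: m(2) w algebra_simps)
  finally show ?case
    using m(1) by auto
qed

section \<open>Orders, subgroups and centres\<close>

lemma (in group) ord_eq_two_power:
  assumes "x \<in> carrier G" "x [^] (2::nat)^Suc n = \<one>" "x [^] (2::nat)^n \<noteq> \<one>"
  shows "ord x = 2^Suc n"
proof -
  obtain i where i: "i \<le> Suc n" "ord x = 2^i"
    using assms(1,2) pow_eq_id divides_primepow_nat[of 2] by (metis two_is_prime_nat)
  have "\<not> i \<le> n"
    using assms(1,3) i(2) pow_eq_id le_imp_power_dvd by metis
  with i show ?thesis
    by (simp add: le_Suc_eq)
qed

lemma (in group) subgroup_nat_pow_closed:
  "subgroup H G \<Longrightarrow> x \<in> H \<Longrightarrow> x [^] (n::nat) \<in> H"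
  using subgroup_int_pow_closed[of H x "int n"] by (simp add: int_pow_int)

lemma (in group) ord_subgroup:
  "subgroup H G \<Longrightarrow> group.ord (G\<lparr>carrier := H\<rparr>) x = ord x"
  by (simp add: group.ord_def[OF subgroup_imp_group] ord_def nat_pow_def)

lemma (in group) cyclic_group_of_card_le_ord:
  assumes "finite (carrier G)" "x \<in> carrier G" "card (carrier G) \<le> ord x"
  shows "cyclic_group G"
proof -
  have "generate G {x} \<subseteq> carrier G"
    using generate_incl assms(2) by blast
  moreover have "card (generate G {x}) = ord x"
    using generate_pow_card[OF assms(2)] by simp
  ultimately have "generate G {x} = carrier G"
    using card_seteq[OF assms(1)] assms(3) by metis
  then show ?thesis
    unfolding cyclic_group_def subgroup_generated_def using assms(2)
    by (intro bexI[of _ x]) simp_all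
qed

lemma subgroup_centre:
  fixes G (structure)
  assumes "group G"
  shows "subgroup (centre G) G"
proof -
  interpret group G by fact
  have central_carrier: "z \<in> carrier G" if "z \<in> centre G" for z
    using that unfolding centre_def by simp
  have central: "z \<otimes> g = g \<otimes> z" if "z \<in> centre G" "g \<in> carrier G" for z g
    using that unfolding centre_def by simp
  show ?thesis
  proof (rule subgroupI)
    show "centre G \<subseteq> carrier G"
      unfolding centre_def by (rule Collect_restrict)
    show "centre G \<noteq> {}"
      using one_closed unfolding centre_def by force
  next
    fix z assume z: "z \<in> centre G"
    have "inv z \<otimes> g = g \<otimes> inv z" if g: "g \<in> carrier G" for g
    proof -
      have "inv (z \<otimes> inv g) = inv (inv g \<otimes> z)"
        using central[OF z inv_closed[OF g]] by simp
      then show ?thesis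
        using central_carrier[OF z] g by (simp add: inv_mult_group)
    qed
    then show "inv z \<in> centre G"
      using central_carrier[OF z] unfolding centre_def by simp
  next
    fix z1 z2 assume z: "z1 \<in> centre G" "z2 \<in> centre G"
    have "z1 \<otimes> z2 \<otimes> g = g \<otimes> (z1 \<otimes> z2)" if g: "g \<in> carrier G" for g
    proof -
      have c: "z1 \<in> carrier G" "z2 \<in> carrier G"
        using central_carrier z by blast+
      have "z1 \<otimes> z2 \<otimes> g = z1 \<otimes> (g \<otimes> z2)"
        using c g central[OF z(2) g] by (simp add: m_assoc)
      also have "\<dots> = z1 \<otimes> g \<otimes> z2"
        using c g by (simp add: m_assoc)
      also have "\<dots> = g \<otimes> (z1 \<otimes> z2)"
        using c g central[OF z(1) g] by (simp add: m_assoc)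
      finally show ?thesis .
    qed
    then show "z1 \<otimes> z2 \<in> centre G"
      using central_carrier[OF z(1)] central_carrier[OF z(2)] unfolding centre_def by simp
  qed
qed

section \<open>The holomorph of a cyclic group of order 2^e\<close>

lemma mem_Hol_carrier [simp]: "(u, a) \<in> carrier (Hol e) \<longleftrightarrow> u < 2^e \<and> a < 2^e \<and> odd a"
  by (simp add: Hol_def)

lemma Hol_mult [simp]: "(u, a) \<otimes>\<^bsub>Hol e\<^esub> (v, b) = ((u + v * a) mod 2^e, (a * b) mod 2^e)"
  by (simp add: Hol_def)

lemma Hol_one: "1 \<le> e \<Longrightarrow> \<one>\<^bsub>Hol e\<^esub> = (0, 1)"
  by (simp add: Hol_def)

lemma Hol_group:
  assumes "1 \<le> e"
  shows "group (Hol e)"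
proof (rule groupI)
  show "\<one>\<^bsub>Hol e\<^esub> \<in> carrier (Hol e)"
    using assms one_less_two_power by (simp add: Hol_one)
next
  fix x y assume "x \<in> carrier (Hol e)" "y \<in> carrier (Hol e)"
  then show "x \<otimes>\<^bsub>Hol e\<^esub> y \<in> carrier (Hol e)"
    using assms by (cases x; cases y) (auto simp: odd_mod_two_power_iff)
next
  fix x y z :: "nat \<times> nat"
  show "x \<otimes>\<^bsub>Hol e\<^esub> y \<otimes>\<^bsub>Hol e\<^esub> z = x \<otimes>\<^bsub>Hol e\<^esub> (y \<otimes>\<^bsub>Hol e\<^esub> z)"
    by (cases x; cases y; cases z) (simp add: mod_add_mult_mod_eq mod_simps, simp add: algebra_simps)
next
  fix x assume x: "x \<in> carrier (Hol e)"
  then show "\<one>\<^bsub>Hol e\<^esub> \<otimes>\<^bsub>Hol e\<^esub> x = x"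
    using assms by (cases x) (auto simp: Hol_one)
  obtain u a where ua: "x = (u, a)" "u < 2^e" "odd a"
    using x by (cases x) auto
  obtain b where b: "b < 2^e" "odd b" "(b * a) mod 2^e = 1"
    using ex_inverse_mod_two_power ua(3) assms by blast
  have "((2^e - u) * b + u * b) mod 2^e = 0"
    using ua(2) by (simp flip: add_mult_distrib)
  then have "(((2^e - u) * b) mod 2^e, b) \<otimes>\<^bsub>Hol e\<^esub> x = \<one>\<^bsub>Hol e\<^esub>"
    using ua b assms by (simp add: Hol_one mod_simps)
  with b show "\<exists>y\<in>carrier (Hol e). y \<otimes>\<^bsub>Hol e\<^esub> x = \<one>\<^bsub>Hol e\<^esub>"
    by (intro bexI[of _ "(((2^e - u) * b) mod 2^e, b)"]) auto
qed

lemma finite_Hol_carrier: "finite (carrier (Hol e))"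
proof -
  have "carrier (Hol e) \<subseteq> {..<2^e} \<times> {..<2^e}"
    by auto
  then show ?thesis
    by (rule finite_subset) simp
qed

lemma Hol_pow: "(u, a) [^]\<^bsub>Hol e\<^esub> (k::nat) = ((u * (\<Sum>i<k. a^i)) mod 2^e, a^k mod 2^e)"
  by (induction k) (simp_all add: Hol_def mod_add_mult_mod_eq mod_simps algebra_simps)

lemma Hol_pow_translation: "1 \<le> e \<Longrightarrow> (p, 1) [^]\<^bsub>Hol e\<^esub> (k::nat) = ((p * k) mod 2^e, 1)"
  by (simp add: Hol_pow one_less_two_power)

lemma Hol_pow_two_power_fst:
  assumes "a mod 4 = 1" "odd m"
  obtains w where "odd w" "fst ((2^t * m, a) [^]\<^bsub>Hol e\<^esub> (2^j::nat)) = (2^(t+j) * w) mod 2^e"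
proof -
  obtain s where "odd s" "(\<Sum>i<2^j. a^i) = 2^j * s"
    using sum_powers_two_power_odd_part assms(1) by blast
  then show thesis
    using that[of "m * s"] assms(2) by (simp add: Hol_pow power_add algebra_simps)
qed

lemma Hol_ord_half_translation:
  assumes "1 \<le> e"
  shows "group.ord (Hol e) (2^(e-1), 1) = 2"
proof -
  interpret group "Hol e"
    using Hol_group assms .
  have "(2::nat)^(e-1) * 2 = 2^e" "(2::nat)^(e-1) < 2^e"
    using assms by (simp_all flip: power_Suc2)
  then have "(2^(e-1), 1) [^]\<^bsub>Hol e\<^esub> (2::nat)^Suc 0 = \<one>\<^bsub>Hol e\<^esub>"
    "(2^(e-1), 1) [^]\<^bsub>Hol e\<^esub> (2::nat)^0 \<noteq> \<one>\<^bsub>Hol e\<^esub>"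
    unfolding Hol_pow_translation[OF assms] Hol_one[OF assms] by simp_all
  then show ?thesis
    using ord_eq_two_power[of "(2^(e-1), 1)" 0] assms one_less_two_power by simp
qed

lemma Hol_ord_of_odd_fst:
  assumes "1 \<le> e" "(u, a) \<in> carrier (Hol e)" "odd u" "a mod 4 = 1"
  shows "group.ord (Hol e) (u, a) = 2^e"
proof -
  interpret group "Hol e"
    using Hol_group assms(1) .
  obtain n where n: "e = Suc n"
    using assms(1) by (cases e) auto
  obtain w where "fst ((2^0 * u, a) [^]\<^bsub>Hol e\<^esub> (2::nat)^e) = (2^(0+e) * w) mod 2^e"
    by (rule Hol_pow_two_power_fst[OF assms(4,3)])
  then have fst_full: "fst ((u, a) [^]\<^bsub>Hol e\<^esub> (2::nat)^e) = 0"
    by simp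
  obtain q where "a^(2^e) = 1 + 2^(e+2) * q"
    by (rule mod_4_eq_1_power_two_power[OF assms(4)])
  then have "a^(2^e) = 1 + 2^e * (4 * q)"
    by (simp add: power_add)
  then have "a^(2^e) mod 2^e = 1"
    by (simp only: mod_mult_self2 mod_less[OF one_less_two_power[OF assms(1)]])
  then have snd_full: "snd ((u, a) [^]\<^bsub>Hol e\<^esub> (2::nat)^e) = 1"
    by (simp add: Hol_pow)
  obtain w' where w': "odd w'"
    "fst ((2^0 * u, a) [^]\<^bsub>Hol e\<^esub> (2::nat)^n) = (2^(0+n) * w') mod 2^e"
    by (rule Hol_pow_two_power_fst[OF assms(4,3)])
  then have "fst ((u, a) [^]\<^bsub>Hol e\<^esub> (2::nat)^n) = 2^(e-1)"
    using two_power_pred_mult_odd_mod[OF assms(1) w'(1)] n by simp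
  then have "(u, a) [^]\<^bsub>Hol e\<^esub> (2::nat)^n \<noteq> \<one>\<^bsub>Hol e\<^esub>"
    using Hol_one[OF assms(1)] by auto
  moreover have "(u, a) [^]\<^bsub>Hol e\<^esub> (2::nat)^Suc n = \<one>\<^bsub>Hol e\<^esub>"
    using fst_full snd_full Hol_one[OF assms(1)] n by (simp add: prod_eq_iff)
  ultimately show ?thesis
    using ord_eq_two_power[OF assms(2)] n by simp
qed

lemma Hol_ord_quarter_dilation:
  assumes "3 \<le> e"
  shows "group.ord (Hol e) (2^(e-2), 1 + 2^(e-1)) = 4"
proof -
  have e1: "1 \<le> e"
    using assms by simp
  interpret group "Hol e"
    using Hol_group[OF e1] .
  define K :: nat where "K = 2^(e-2)"
  obtain k where k: "e = 3 + k"
    using assms le_iff_add by blast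
  have K: "(2::nat)^(e-1) = 2 * K" "(2::nat)^e = 4 * K" "even K" "0 < K"
    unfolding K_def k by (simp_all add: power_add)
  have x: "(K, 1 + 2 * K) \<in> carrier (Hol e)"
    using K by simp
  obtain L where L: "K = 2 * L"
    using K(3) ..
  have "K * (\<Sum>i<2. (1 + 2 * K)^i) = 2 * K + 4 * K * L"
    by (simp add: numeral_eq_Suc L algebra_simps)
  then have fst_sq: "(K * (\<Sum>i<2. (1 + 2 * K)^i)) mod 2^e = 2 * K"
    using K by (simp only: mod_mult_self2 mod_less)
  have "(1 + 2 * K)^2 = 1 + 4 * K * (1 + K)"
    by (simp add: power2_eq_square algebra_simps)
  then have snd_sq: "(1 + 2 * K)^2 mod 2^e = 1"
    using K by (simp only: mod_mult_self2 mod_less)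
  have sq: "(K, 1 + 2 * K) [^]\<^bsub>Hol e\<^esub> (2::nat) = (2 * K, 1)"
    by (simp only: Hol_pow fst_sq snd_sq)
  have "(K, 1 + 2 * K) [^]\<^bsub>Hol e\<^esub> (2::nat)^Suc 1
      = ((K, 1 + 2 * K) [^]\<^bsub>Hol e\<^esub> (2::nat)) [^]\<^bsub>Hol e\<^esub> (2::nat)"
    using x by (simp add: nat_pow_pow)
  also have "\<dots> = (2 * K, 1) [^]\<^bsub>Hol e\<^esub> (2::nat)"
    by (simp only: sq)
  also have "\<dots> = \<one>\<^bsub>Hol e\<^esub>"
    using K Hol_pow_translation[OF e1, of "2 * K" 2] Hol_one[OF e1] by simp
  finally have "(K, 1 + 2 * K) [^]\<^bsub>Hol e\<^esub> (2::nat)^Suc 1 = \<one>\<^bsub>Hol e\<^esub>" .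
  moreover have "(K, 1 + 2 * K) [^]\<^bsub>Hol e\<^esub> (2::nat)^1 \<noteq> \<one>\<^bsub>Hol e\<^esub>"
    using sq K Hol_one[OF e1] by simp
  ultimately have "ord (K, 1 + 2 * K) = 2^Suc 1"
    by (rule ord_eq_two_power[OF x])
  then show ?thesis
    using K(1) by (simp add: K_def)
qed

section \<open>Transitive non-regular subgroups\<close>

locale transitive_nonregular =
  fixes e :: nat and G :: "(nat \<times> nat) set"
  assumes two_le_e: "2 \<le> e"
    and subgroup_G: "subgroup G (Hol e)"
    and transitive_G: "transitive_sub e G"
    and nonregular_G: "\<not> regular_sub e G"
begin

sublocale H: group "Hol e"
  using Hol_group two_le_e by simp

abbreviation Z :: "(nat \<times> nat) set"
  where "Z \<equiv> centre (Hol e\<lparr>carrier := G\<rparr>)"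

lemma Hol_one_eq: "\<one>\<^bsub>Hol e\<^esub> = (0, 1)"
  using Hol_one two_le_e by simp

lemma mem_G_bounds: "(u, a) \<in> G \<Longrightarrow> u < 2^e \<and> a < 2^e \<and> odd a"
  using subgroup.subset[OF subgroup_G] by fastforce

lemma ex_mem_G_with_fst:
  assumes "w < 2^e"
  obtains a where "(w, a) \<in> G"
proof -
  obtain u a where ua: "(u, a) \<in> G" "hol_act e (u, a) 0 = w"
    using transitive_G assms unfolding transitive_sub_def by fastforce
  then have "u = w"
    using mem_G_bounds by (simp add: hol_act_def)
  then show thesis
    using that ua(1) by simp
qed

lemma ex_mem_G_with_fst_one:
  obtains a where "(1, a) \<in> G"
proof -
  have "1 < (2::nat)^e"
    using one_less_two_power two_le_e by simp
  then obtain a where "(1, a) \<in> G"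
    by (rule ex_mem_G_with_fst)
  then show thesis
    by (rule that)
qed

lemma ex_nontrivial_stabiliser:
  obtains b where "(0, b) \<in> G" "b \<noteq> 1"
proof -
  have "stab1 e G \<noteq> {(0, 1)}"
    using nonregular_G transitive_G Hol_one_eq by (simp add: regular_sub_def)
  moreover have "(0, 1) \<in> stab1 e G"
    using subgroup.one_closed[OF subgroup_G] Hol_one_eq by (simp add: stab1_def hol_act_def)
  ultimately obtain g where "g \<in> stab1 e G" "g \<noteq> (0, 1)"
    by blast
  moreover obtain u b where "g = (u, b)"
    by (cases g)
  ultimately have ub: "(u, b) \<in> stab1 e G" "(u, b) \<noteq> (0, 1)"
    by simp_all
  then have ubG: "(u, b) \<in> G" and "u mod 2^e = 0"
    by (simp_all add: stab1_def hol_act_def)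
  moreover have "u < 2^e"
    using mem_G_bounds[OF ubG] by simp
  ultimately show thesis
    using that ub(2) by simp
qed

lemma translation_mem_of_same_snd:
  assumes "(u, a) \<in> G" "(v, a) \<in> G"
  shows "((u + 2^e - v) mod 2^e, 1) \<in> G"
proof -
  let ?t = "((u + 2^e - v) mod 2^e, 1::nat)"
  have ua: "(u, a) \<in> carrier (Hol e)" and va: "(v, a) \<in> carrier (Hol e)"
    using assms subgroup.subset[OF subgroup_G] by auto
  have t: "?t \<in> carrier (Hol e)"
    using one_less_two_power[of e] two_le_e by simp
  have "?t \<otimes>\<^bsub>Hol e\<^esub> (v, a) = (u, a)"
    using ua va by (simp add: mod_add_left_eq)
  then have "?t = (u, a) \<otimes>\<^bsub>Hol e\<^esub> inv\<^bsub>Hol e\<^esub> (v, a)"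
    using H.inv_solve_right[OF t ua va] by simp
  moreover have "(u, a) \<otimes>\<^bsub>Hol e\<^esub> inv\<^bsub>Hol e\<^esub> (v, a) \<in> G"
    using assms subgroup.m_closed[OF subgroup_G] subgroup.m_inv_closed[OF subgroup_G] by blast
  ultimately show ?thesis
    by simp
qed

lemma half_translation_mem_of_translation:
  assumes "(p, 1) \<in> G" "0 < p" "p < 2^e"
  shows "(2^(e-1), 1) \<in> G"
proof -
  obtain r m where p: "p = 2^r * m" "odd m"
    using ex_two_power_mult_odd assms(2) by blast
  have "2^r \<le> p"
    unfolding p(1) using odd_pos[OF p(2)] by simp
  then have "(2::nat)^r < 2^e"
    using assms(3) by linarith
  then have "(2::nat)^r * 2^(e-1-r) = 2^(e-1)"
    by (simp flip: power_add)
  then have "(p * 2^(e-1-r)) mod 2^e = 2^(e-1)"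
    using two_power_pred_mult_odd_mod[OF _ p(2), of e] two_le_e p(1) by (simp add: ac_simps)
  moreover have "(p, 1) [^]\<^bsub>Hol e\<^esub> (2::nat)^(e-1-r) = ((p * 2^(e-1-r)) mod 2^e, 1)"
    using Hol_pow_translation two_le_e by simp
  moreover have "(p, 1) [^]\<^bsub>Hol e\<^esub> (2::nat)^(e-1-r) \<in> G"
    using H.subgroup_nat_pow_closed[OF subgroup_G assms(1)] .
  ultimately show ?thesis
    by simp
qed

lemma half_translation_mem: "(2^(e-1), 1) \<in> G"
proof -
  obtain b where b: "(0, b) \<in> G" "b \<noteq> 1"
    by (rule ex_nontrivial_stabiliser)
  obtain a where a: "(1, a) \<in> G"
    by (rule ex_mem_G_with_fst_one)
  have "(0, b) \<otimes>\<^bsub>Hol e\<^esub> (1, a) \<in> G" "(1, a) \<otimes>\<^bsub>Hol e\<^esub> (0, b) \<in> G"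
    using a b subgroup.m_closed[OF subgroup_G] by blast+
  moreover have "b < 2^e" "odd b"
    using b mem_G_bounds by auto
  ultimately have "(b, (b * a) mod 2^e) \<in> G" "(1, (b * a) mod 2^e) \<in> G"
    using one_less_two_power[of e] two_le_e by (simp_all add: mult.commute)
  then have "((b + 2^e - 1) mod 2^e, 1) \<in> G"
    by (rule translation_mem_of_same_snd)
  moreover have "b + 2^e - 1 = (b - 1) + 2^e"
    using odd_pos[OF \<open>odd b\<close>] by simp
  moreover have p: "0 < b - 1" "b - 1 < 2^e"
    using b(2) \<open>b < 2^e\<close> odd_pos[OF \<open>odd b\<close>] by simp_all
  ultimately have "(b - 1, 1) \<in> G"
    by (simp only: mod_add_self2 mod_less)
  then show ?thesis
    using p by (rule half_translation_mem_of_translation)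
qed

lemma subgroup_Z: "subgroup Z (Hol e)"
  by (rule H.incl_subgroup[OF subgroup_G subgroup_centre[OF H.subgroup_imp_group[OF subgroup_G]]])

lemma central_mem_G: "z \<in> Z \<Longrightarrow> z \<in> G"
  by (simp add: centre_def)

lemma central_commute: "z \<in> Z \<Longrightarrow> g \<in> G \<Longrightarrow> z \<otimes>\<^bsub>Hol e\<^esub> g = g \<otimes>\<^bsub>Hol e\<^esub> z"
  by (simp add: centre_def)

lemma half_translation_central: "(2^(e-1), 1) \<in> Z"
proof -
  have "(2^(e-1), 1) \<otimes>\<^bsub>Hol e\<^esub> g = g \<otimes>\<^bsub>Hol e\<^esub> (2^(e-1), 1)" if "g \<in> G" for g
  proof -
    obtain u a where g: "g = (u, a)"
      by (cases g)
    then have "odd a" "a < 2^e"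
      using that mem_G_bounds by auto
    have "(u + 2^(e-1) * a) mod 2^e = (u + (2^(e-1) * a) mod 2^e) mod 2^e"
      by (simp add: mod_add_right_eq)
    also have "\<dots> = (2^(e-1) + u) mod 2^e"
      using two_power_pred_mult_odd_mod[of e a] two_le_e \<open>odd a\<close> by (simp add: add.commute)
    finally show ?thesis
      using g \<open>a < 2^e\<close> by (simp add: mult.commute)
  qed
  then show ?thesis
    using half_translation_mem unfolding centre_def by simp
qed

lemma central_fst_add_snd:
  assumes "(c, d) \<in> Z" "(1, a) \<in> G"
  shows "(c + d) mod 2^e = (1 + c * a) mod 2^e"
  using central_commute[OF assms] by simp

lemma central_eq_of_fst_eq:
  assumes "(c, d) \<in> Z" "(c, d') \<in> Z"
  shows "d = d'"
proof -
  obtain a where "(1, a) \<in> G"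
    by (rule ex_mem_G_with_fst_one)
  then have "(c + d) mod 2^e = (c + d') mod 2^e"
    using central_fst_add_snd assms by simp
  then have "d mod 2^e = d' mod 2^e"
    by (simp add: nat_mod_eq_iff)
  moreover have "d < 2^e" "d' < 2^e"
    using assms central_mem_G mem_G_bounds by blast+
  ultimately show ?thesis
    by simp
qed

lemma central_fst_even:
  assumes "(c, d) \<in> Z"
  shows "even c"
proof (rule ccontr)
  assume "odd c"
  obtain b where b: "(0, b) \<in> G" "b \<noteq> 1"
    by (rule ex_nontrivial_stabiliser)
  have "b < 2^e" "odd b"
    using b(1) mem_G_bounds by auto
  have "(c * b) mod 2^e = c mod 2^e"
    using central_commute[OF assms b(1)] by simp
  moreover have "c \<le> c * b"
    using odd_pos[OF \<open>odd b\<close>] by simp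
  ultimately have "2^e dvd c * b - c"
    by (simp add: mod_eq_dvd_iff_nat)
  then have "2^e dvd c * (b - 1)"
    by (simp add: right_diff_distrib')
  moreover have "coprime (2^e) c"
    using \<open>odd c\<close> by simp
  ultimately have "2^e dvd b - 1"
    using coprime_dvd_mult_right_iff by blast
  then have "b - 1 = 0"
    using \<open>b < 2^e\<close> by (meson dvd_imp_le less_imp_diff_less not_le neq0_conv)
  then show False
    using b(2) odd_pos[OF \<open>odd b\<close>] by simp
qed

lemma central_snd_mod_4:
  assumes "(c, d) \<in> Z"
  shows "d mod 4 = 1"
proof -
  obtain a where a: "(1, a) \<in> G"
    by (rule ex_mem_G_with_fst_one)
  have "(4::nat) dvd 2^e"
    using le_imp_power_dvd[OF two_le_e, of 2] by simp
  then have "(c + d) mod 4 = (1 + c * a) mod 4"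
    using central_fst_add_snd[OF assms a] by (metis mod_mod_cancel)
  moreover obtain k l where "c = 2 * k" "a = 2 * l + 1"
    using central_fst_even[OF assms] mem_G_bounds[OF a] by (auto elim!: evenE oddE)
  ultimately have "(2 * k + d) mod 4 = (1 + 2 * k + 4 * (k * l)) mod 4"
    by (simp add: algebra_simps)
  then show ?thesis
    by presburger
qed

lemma ord_central:
  assumes "(c, d) \<in> Z" "c = 2^t * m" "odd m" "t < e"
  shows "H.ord (c, d) = 2^(e-t)"
proof -
  define n where "n = e - t - 1"
  have e_t: "e - t = Suc n" "t + Suc n = e" "t + n = e - 1"
    using assms(4) by (simp_all add: n_def)
  have d: "d mod 4 = 1"
    using central_snd_mod_4[OF assms(1)] .
  have cd: "(c, d) \<in> carrier (Hol e)"
    using assms(1) central_mem_G subgroup.subset[OF subgroup_G] by blast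
  obtain w where "fst ((2^t * m, d) [^]\<^bsub>Hol e\<^esub> (2::nat)^Suc n) = (2^(t + Suc n) * w) mod 2^e"
    by (rule Hol_pow_two_power_fst[OF d assms(3)])
  then have w: "fst ((c, d) [^]\<^bsub>Hol e\<^esub> (2::nat)^Suc n) = (2^e * w) mod 2^e"
    by (simp only: assms(2) e_t(2))
  obtain w' where w'_odd: "odd w'"
    and "fst ((2^t * m, d) [^]\<^bsub>Hol e\<^esub> (2::nat)^n) = (2^(t + n) * w') mod 2^e"
    by (rule Hol_pow_two_power_fst[OF d assms(3)])
  then have w': "fst ((c, d) [^]\<^bsub>Hol e\<^esub> (2::nat)^n) = (2^(e-1) * w') mod 2^e"
    by (simp only: assms(2) e_t(3))
  obtain d' where d': "(c, d) [^]\<^bsub>Hol e\<^esub> (2::nat)^Suc n = (0, d')"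
    using w by (metis mod_mult_self1_is_0 prod.collapse)
  have "(0, d') \<in> Z"
    using H.subgroup_nat_pow_closed[OF subgroup_Z assms(1), of "2^Suc n"] by (simp only: d')
  moreover have "(0, 1) \<in> Z"
    using subgroup.one_closed[OF subgroup_Z] Hol_one_eq by simp
  ultimately have "(c, d) [^]\<^bsub>Hol e\<^esub> (2::nat)^Suc n = \<one>\<^bsub>Hol e\<^esub>"
    using central_eq_of_fst_eq d' Hol_one_eq by simp
  moreover have "(c, d) [^]\<^bsub>Hol e\<^esub> (2::nat)^n \<noteq> \<one>\<^bsub>Hol e\<^esub>"
    using w' two_power_pred_mult_odd_mod[of e w'] w'_odd two_le_e Hol_one_eq by auto
  ultimately show ?thesis
    using H.ord_eq_two_power[OF cd] e_t(1) by simp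
qed

lemma card_central_le:
  assumes "\<forall>z\<in>Z. 2^t dvd fst z" "t \<le> e"
  shows "card Z \<le> 2^(e-t)"
proof -
  let ?f = "\<lambda>z. fst z div 2^t"
  have "inj_on ?f Z"
  proof (rule inj_onI)
    fix z z' assume zz: "z \<in> Z" "z' \<in> Z" "?f z = ?f z'"
    then have "fst z = fst z'"
      using assms(1) by (metis dvd_div_mult_self)
    with zz show "z = z'"
      using central_eq_of_fst_eq by (metis prod.collapse)
  qed
  moreover have "?f ` Z \<subseteq> {..<2^(e-t)}"
  proof
    fix k assume "k \<in> ?f ` Z"
    then obtain z where "z \<in> Z" "k = fst z div 2^t"
      by blast
    moreover have "fst z < 2^(e-t) * 2^t"
      using \<open>z \<in> Z\<close> central_mem_G mem_G_bounds assms(2)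
      by (metis le_add_diff_inverse2 power_add prod.collapse)
    ultimately show "k \<in> {..<2^(e-t)}"
      by (simp add: less_mult_imp_div_less)
  qed
  ultimately show ?thesis
    using card_inj_on_le[of ?f Z "{..<2^(e-t)}"] by simp
qed

lemma cyclic_centre: "cyclic_group (Hol e\<lparr>carrier := Z\<rparr>)"
proof -
  define P where "P j \<longleftrightarrow> (\<exists>z\<in>Z. \<not> 2^j dvd fst z)" for j
  have "\<not> (2::nat)^e dvd 2^(e-1)"
    using two_le_e by (simp add: nat_dvd_not_less)
  then have "P e"
    using half_translation_central unfolding P_def by force
  moreover have "\<not> P 0"
    by (simp add: P_def)
  ultimately obtain t where t: "t < e" "\<not> P t" "P (Suc t)"
    using ex_least_nat_less[of P e] by blast
  then have divisible: "\<forall>z\<in>Z. 2^t dvd fst z"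
    by (simp add: P_def)
  obtain c d where cd: "(c, d) \<in> Z" "\<not> 2^Suc t dvd c"
    using t(3) unfolding P_def by force
  obtain m where m: "c = 2^t * m"
    using divisible cd(1) by force
  with cd(2) have "odd m"
    by auto
  then have "H.ord (c, d) = 2^(e-t)"
    using ord_central cd(1) m t(1) by blast
  moreover have "card Z \<le> 2^(e-t)"
    using card_central_le divisible t(1) by simp
  moreover have "finite Z"
    using subgroup.subset[OF subgroup_Z] finite_Hol_carrier by (rule finite_subset)
  ultimately show ?thesis
    using group.cyclic_group_of_card_le_ord[OF H.subgroup_imp_group[OF subgroup_Z], of "(c, d)"]
      H.ord_subgroup[OF subgroup_Z] cd(1) by simp
qed

end

locale transitive_nonregular_no_full_order = transitive_nonregular +
  assumes no_full_order: "\<forall>g\<in>G. group.ord (Hol e) g \<noteq> 2^e"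
begin

lemma snd_mod_4_of_odd_fst:
  assumes "(u, a) \<in> G" "odd u"
  shows "a mod 4 = 3"
proof -
  have "odd a" and ua: "(u, a) \<in> carrier (Hol e)"
    using assms(1) mem_G_bounds by auto
  moreover have "a mod 4 \<noteq> 1"
  proof
    assume "a mod 4 = 1"
    then have "group.ord (Hol e) (u, a) = 2^e"
      using Hol_ord_of_odd_fst[OF _ ua assms(2)] two_le_e by simp
    then show False
      using no_full_order assms(1) by blast
  qed
  ultimately show ?thesis
    by presburger
qed

lemma snd_mod_4_eq_of_mem:
  assumes "(u, a) \<in> G"
  shows "a mod 4 = (1 + 2 * u) mod 4"
proof (cases "odd u")
  case True
  then show ?thesis
    using snd_mod_4_of_odd_fst[OF assms] by presburger
next
  case False
  obtain a1 where a1: "(1, a1) \<in> G"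
    by (rule ex_mem_G_with_fst_one)
  have "(1, a1) \<otimes>\<^bsub>Hol e\<^esub> (u, a) \<in> G"
    using a1 assms subgroup.m_closed[OF subgroup_G] by blast
  then have "((1 + u * a1) mod 2^e, (a1 * a) mod 2^e) \<in> G"
    by simp
  moreover have "odd ((1 + u * a1) mod 2^e)"
    using False two_le_e by (simp add: odd_mod_two_power_iff)
  ultimately have "(a1 * a) mod 2^e mod 4 = 3"
    by (rule snd_mod_4_of_odd_fst)
  moreover have "(4::nat) dvd 2^e"
    using le_imp_power_dvd[OF two_le_e, of 2] by simp
  ultimately have "(a1 * a) mod 4 = 3"
    by (simp add: mod_mod_cancel)
  moreover have "(a1 * a) mod 4 = ((a1 mod 4) * (a mod 4)) mod 4"
    by (simp only: mod_mult_eq)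
  ultimately have "(3 * (a mod 4)) mod 4 = 3"
    using snd_mod_4_of_odd_fst[OF a1 odd_one] by simp
  moreover have "a mod 4 = 1 \<or> a mod 4 = 3"
    using mem_G_bounds[OF assms] by presburger
  ultimately have "a mod 4 = 1"
    by auto
  moreover obtain v where "u = 2 * v"
    using False by blast
  ultimately show ?thesis
    by presburger
qed

lemma three_le_e: "3 \<le> e"
proof (rule ccontr)
  assume "\<not> 3 \<le> e"
  then have "e = 2"
    using two_le_e by simp
  obtain b where b: "(0, b) \<in> G" "b \<noteq> 1"
    by (rule ex_nontrivial_stabiliser)
  then have "b mod 4 = 1" "b < 4"
    using snd_mod_4_eq_of_mem[of 0 b] mem_G_bounds \<open>e = 2\<close> by auto
  with b(2) show False
    by simp
qed

lemma half_dilation_mem: "(0, 1 + 2^(e-1)) \<in> G"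
proof -
  obtain b where b: "(0, b) \<in> G" "b \<noteq> 1"
    by (rule ex_nontrivial_stabiliser)
  have "b mod 4 = 1" "b < 2^e"
    using snd_mod_4_eq_of_mem[OF b(1)] mem_G_bounds[OF b(1)] by simp_all
  then have "0 < b - 1"
    using b(2) by presburger
  then obtain r m where rm: "b - 1 = 2^r * m" "odd m"
    by (rule ex_two_power_mult_odd)
  have "4 dvd b - 1"
    using \<open>b mod 4 = 1\<close> by presburger
  have "2 \<le> r"
  proof (rule ccontr)
    assume "\<not> 2 \<le> r"
    then have "r = 0 \<or> r = 1"
      by auto
    then have "4 dvd m \<or> 4 dvd 2 * m"
      using \<open>4 dvd b - 1\<close> rm(1) by auto
    with rm(2) show False
      by presburger
  qed
  have "2^r \<le> b - 1"
    unfolding rm(1) using odd_pos[OF rm(2)] by simp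
  then have "(2::nat)^r < 2^e"
    using \<open>b < 2^e\<close> by linarith
  then have "r < e"
    by simp
  obtain w where w: "(1 + 2^r * m)^(2^(e-1-r)) = 1 + 2^(r + (e-1-r)) * w" "odd w"
    using one_plus_two_power_pow_two_power[OF \<open>2 \<le> r\<close>, of m "e-1-r"] rm(2) by blast
  have "b = 1 + 2^r * m"
    using rm(1) \<open>0 < b - 1\<close> by arith
  then have "b^(2^(e-1-r)) mod 2^e = 1 + 2^(e-1)"
    using w one_plus_two_power_pred_mult_mod[OF two_le_e, of w] \<open>r < e\<close> by simp
  moreover have "(0, b) [^]\<^bsub>Hol e\<^esub> (2::nat)^(e-1-r) \<in> G"
    using H.subgroup_nat_pow_closed[OF subgroup_G b(1)] .
  ultimately show ?thesis
    by (simp add: Hol_pow)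
qed

lemma quarter_dilation_mem: "(2^(e-2), 1 + 2^(e-1)) \<in> G"
proof -
  define K :: nat where "K = 2^(e-2)"
  obtain k where k: "e = 3 + k"
    using three_le_e le_iff_add by blast
  have K: "(2::nat)^(e-1) = 2 * K" "(2::nat)^e = 4 * K" "2^(1 + (e-3)) = K" "0 < K"
    unfolding K_def k by (simp_all add: power_add)
  have "2 < (2::nat)^e"
    using power_increasing[OF two_le_e, of "2::nat"] by simp
  then obtain a where a: "(2, a) \<in> G"
    by (rule ex_mem_G_with_fst)
  have a4: "a mod 4 = 1"
    using snd_mod_4_eq_of_mem[OF a] by simp
  obtain w where w: "odd w" "fst ((2^1 * 1, a) [^]\<^bsub>Hol e\<^esub> (2::nat)^(e-3)) = (2^(1 + (e-3)) * w) mod 2^e"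
    by (rule Hol_pow_two_power_fst[OF a4 odd_one])
  obtain q where q: "a^(2^(e-3)) = 1 + 2^(e-3+2) * q"
    by (rule mod_4_eq_1_power_two_power[OF a4])
  have "e - 3 + 2 = e - 1"
    using three_le_e by simp
  then have "a^(2^(e-3)) mod 2^e = (if odd q then 1 + 2*K else 1)"
    using q one_plus_two_power_pred_mult_mod[OF two_le_e, of q] K(1) by simp
  then have x: "((K * w) mod 2^e, if odd q then 1 + 2*K else 1) \<in> G"
    using H.subgroup_nat_pow_closed[OF subgroup_G a, of "2^(e-3)"] w(2) K(3)
    by (simp add: Hol_pow)
  have "(0, 1 + 2*K) \<in> G"
    using half_dilation_mem K(1) by simp
  have "1 + 2 * K < 2^e"
    using K by simp
  have Kw: "((K * w) mod 2^e, 1 + 2*K) \<in> G"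
  proof (cases "odd q")
    case True
    then show ?thesis
      using x by simp
  next
    case False
    then have "((K * w) mod 2^e, 1) \<in> G"
      using x by simp
    then have "((K * w) mod 2^e, 1) \<otimes>\<^bsub>Hol e\<^esub> (0, 1 + 2*K) \<in> G"
      using \<open>(0, 1 + 2*K) \<in> G\<close> subgroup.m_closed[OF subgroup_G] by blast
    then show ?thesis
      using \<open>1 + 2 * K < 2^e\<close> by simp
  qed
  consider "(K * w) mod 2^e = K" | "(K * w) mod 2^e = 3 * K"
    using two_power_minus_two_mult_odd_mod[OF two_le_e w(1)] unfolding K_def by blast
  then have "(K, 1 + 2*K) \<in> G"
  proof cases
    case 1
    then show ?thesis
      using Kw by simp
  next
    case 2
    then have "(3 * K, 1 + 2*K) \<in> G" "(2 * K, 1) \<in> G"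
      using Kw half_translation_mem K(1) by simp_all
    then have "(3 * K, 1 + 2*K) \<otimes>\<^bsub>Hol e\<^esub> (2 * K, 1) \<in> G"
      using subgroup.m_closed[OF subgroup_G] by blast
    moreover have "3 * K + 2 * K * (1 + 2 * K) = K + 4 * K * (1 + K)"
      by (simp add: algebra_simps)
    then have "(3 * K + 2 * K * (1 + 2 * K)) mod 2^e = K"
      using K(2) \<open>1 + 2 * K < 2^e\<close> by (simp only: mod_mult_self2 mod_less)
    moreover have "((1 + 2 * K) * 1) mod 2^e = 1 + 2 * K"
      using \<open>1 + 2 * K < 2^e\<close> by simp
    ultimately show ?thesis
      by (simp only: Hol_mult)
  qed
  then show ?thesis
    using K(1) by (simp add: K_def)
qed

lemma quarter_dilation_central: "(2^(e-2), 1 + 2^(e-1)) \<in> Z"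
proof -
  define K :: nat where "K = 2^(e-2)"
  obtain k where k: "e = 2 + k"
    using two_le_e le_iff_add by blast
  have K: "(2::nat)^(e-1) = 2 * K" "(2::nat)^e = K * 4"
    unfolding K_def k by (simp_all add: power_add)
  have "(K, 1 + 2*K) \<otimes>\<^bsub>Hol e\<^esub> g = g \<otimes>\<^bsub>Hol e\<^esub> (K, 1 + 2*K)" if "g \<in> G" for g
  proof -
    obtain u a where g: "g = (u, a)"
      by (cases g)
    have "(K * a) mod 2^e = (K * (1 + 2 * u)) mod 2^e"
      unfolding K(2) mod_mult_mult1 using snd_mod_4_eq_of_mem that g by simp
    then have "(u + K * a) mod 2^e = (u + K * (1 + 2 * u)) mod 2^e"
      by (metis mod_add_right_eq)
    also have "\<dots> = (K + u * (1 + 2 * K)) mod 2^e"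
      by (simp add: algebra_simps)
    finally show ?thesis
      unfolding g Hol_mult by (simp add: mult.commute)
  qed
  then show ?thesis
    using quarter_dilation_mem K(1) unfolding centre_def K_def by simp
qed

end

theorem lemma5p5:
  fixes e :: nat and G :: "(nat \<times> nat) set"
  assumes e2: "e \<ge> 2"
    and sub: "subgroup G (Hol e)"
    and trans: "transitive_sub e G"
    and nonreg: "\<not> regular_sub e G"
  shows "(2^(e-1), 1) \<in> centre ((Hol e)\<lparr>carrier := G\<rparr>)
      \<and> group.ord (Hol e) (2^(e-1), 1) = 2
      \<and> cyclic_group (((Hol e)\<lparr>carrier := G\<rparr>)\<lparr>carrier := centre ((Hol e)\<lparr>carrier := G\<rparr>)\<rparr>)
      \<and> ((\<forall>g \<in> G. group.ord (Hol e) g \<noteq> 2^e) \<longrightarrow>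
           (2^(e-2), 1 + 2^(e-1)) \<in> centre ((Hol e)\<lparr>carrier := G\<rparr>)
           \<and> group.ord (Hol e) (2^(e-2), 1 + 2^(e-1)) = 4)"
proof -
  interpret transitive_nonregular e G
    by (rule transitive_nonregular.intro[OF assms])
  have "(\<forall>g \<in> G. group.ord (Hol e) g \<noteq> 2^e) \<longrightarrow>
      (2^(e-2), 1 + 2^(e-1)) \<in> Z \<and> group.ord (Hol e) (2^(e-2), 1 + 2^(e-1)) = 4"
  proof
    assume "\<forall>g \<in> G. group.ord (Hol e) g \<noteq> 2^e"
    then interpret transitive_nonregular_no_full_order e G
      by (intro transitive_nonregular_no_full_order.intro transitive_nonregular_axioms
          transitive_nonregular_no_full_order_axioms.intro)
    show "(2^(e-2), 1 + 2^(e-1)) \<in> Z \<and> group.ord (Hol e) (2^(e-2), 1 + 2^(e-1)) = 4"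
      using quarter_dilation_central Hol_ord_quarter_dilation[OF three_le_e] by simp
  qed
  then show ?thesis
    using half_translation_central Hol_ord_half_translation cyclic_centre e2 by simp
qed

end
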